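(* Let $\alpha,\gamma\in\mathbb{C}$ and $\Delta\in\mathbb{C}^*$. Consider extensions of conformal $\mathrm{SV}$-modules $$0\to V(\alpha,\Delta)\to E\to\mathbb{C}c_\gamma\to0,$$ realized as $E=\mathbb{C}[\partial]v_\Delta\oplus\mathbb{C}c_\gamma$ (as vector spaces), with $\mathbb{C}[\partial]v_\Delta\cong V(\alpha,\Delta)$ a submodule and $$L_\lambda c_\gamma=f(\partial,\lambda)v_\Delta,\ M_\lambda c_\gamma=g(\partial,\lambda)v_\Delta,\ Y_\lambda c_\gamma=h(\partial,\lambda)v_\Delta,\ \partial c_\gamma=\gamma c_\gamma+a(\partial)v_\Delta,$$ where $f,g,h\in\mathbb{C}[\partial,\lambda]$, $a\in\mathbb{C}[\partial]$. There are nontrivial extensions of this form if and only if $\alpha+\gamma=0$ and $\Delta=1$. In this case $\dim_{\mathbb{C}}\mathrm{Ext}(\mathbb{C}c_{-\alpha},V(\alpha,1))=1$, and the only (up to a scalar) nontrivial extension is given by $g=h=0$ and $f(\partial,\lambda)=a(\partial)=a_0$ with $a_0\in\mathbb{C}^*$.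
   Context: A Lie conformal algebra is a $\mathbb{C}[\partial]$-module $R$ with a $\mathbb{C}$-bilinear $\lambda$-bracket satisfying conformal sesquilinearity, skew-symmetry $[a_\lambda b]=-[b_{-\lambda-\partial}a]$ and the Jacobi identity. A conformal module over $R$ is a $\mathbb{C}[\partial]$-module $V$ with a linear map $a\mapsto a_\lambda\in\mathrm{End}_{\mathbb{C}}(V)\otimes\mathbb{C}[\lambda]$ such that $[a_\lambda,b_\mu]=[a_\lambda b]_{\lambda+\mu}$ and $(\partial a)_\lambda=[\partial,a_\lambda]=-\lambda a_\lambda$. The Schrödinger–Virasoro conformal algebra $\mathrm{SV}$ is the free $\mathbb{C}[\partial]$-module with basis $L,M,Y$ whose nonzero $\lambda$-brackets (up to skew-symmetry) are $[L_\lambda L]=(\partial+2\lambda)L$, $[L_\lambda Y]=(\partial+\tfrac32\lambda)Y$, $[L_\lambda M]=(\partial+\lambda)M$, $[Y_\lambda Y]=(\partial+2\lambda)M$. $V(\alpha,\Delta)=\mathbb{C}[\partial]v_\Delta$ has $L_\lambda v_\Delta=(\partial+\alpha+\Delta\lambda)v_\Delta$, $M_\lambda v_\Delta=Y_\lambda v_\Delta=0$. $\mathbb{C}c_\gamma$ is the one-dimensional module with $\partial c_\gamma=\gamma c_\gamma$ and zero $\lambda$-actions. An extension of $W$ by $V$ is an exact sequence $0\to V\to E\to W\to0$ of conformal modules; equivalence is via a module map of middle terms compatible with identities on $V,W$; trivial means equivalent to the direct sum. $\mathrm{Ext}(W,V)$ is the space of extension cocycles modulo coboundaries. *)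

theory Defs
  imports "HOL-Computational_Algebra.Polynomial"
begin

text \<open>Elements of E = C[d] v + C c are encoded as pairs (p, k) meaning p(d) v + k c.\<close>
type_synonym elt = "complex poly \<times> complex"

text \<open>Extension data (f, g, h, a).  f, g, h are bivariate polynomials in d and lambda,
  encoded as polynomials in lambda (outer variable) whose coefficients are polynomials
  in d (inner variable); a is a polynomial in d.\<close>
type_synonym extdata = "complex poly poly \<times> complex poly poly \<times> complex poly poly \<times> complex poly"

datatype gen = L | M | Y

definition eadd :: "elt \<Rightarrow> elt \<Rightarrow> elt" where
  "eadd x y = (fst x + fst y, snd x + snd y)"

definition esc :: "complex \<Rightarrow> elt \<Rightarrow> elt" where
  "esc c x = (smult c (fst x), c * snd x)"

definition ezero :: elt where
  "ezero = (0, 0)"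

text \<open>The defining lambda-brackets of SV: a result Some (c1, c2, z) means
  [a_lambda b] = (c1 d + c2 lambda) z; None means the bracket is zero.\<close>
definition sv_gen_br :: "gen \<Rightarrow> gen \<Rightarrow> (complex \<times> complex \<times> gen) option" where
  "sv_gen_br a b = (case (a, b) of
       (L, L) \<Rightarrow> Some (1, 2, L)
     | (L, Y) \<Rightarrow> Some (1, 3/2, Y)
     | (L, M) \<Rightarrow> Some (1, 1, M)
     | (Y, Y) \<Rightarrow> Some (1, 2, M)
     | _ \<Rightarrow> None)"

text \<open>All brackets, obtained by skew-symmetry
  [b_lambda a] = - [a_(-lambda-d) b] = ((c2 - c1) d + c2 lambda) z.\<close>
definition sv_br :: "gen \<Rightarrow> gen \<Rightarrow> (complex \<times> complex \<times> gen) option" where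
  "sv_br a b = (case sv_gen_br a b of
       Some t \<Rightarrow> Some t
     | None \<Rightarrow> (case sv_gen_br b a of
                  Some (c1, c2, z) \<Rightarrow> Some (c2 - c1, c2, z)
                | None \<Rightarrow> None))"

text \<open>Conformal SV-module axioms on the space of elements, with the lambda-action
  evaluated at complex values of lambda, mu.  Using (d z)_nu = - nu z_nu,
  [(c1 d + c2 lambda) z]_(lambda+mu) acts as (c2 lambda - c1 (lambda + mu)) z_(lambda+mu).\<close>
definition conformal_sv_module :: "(elt \<Rightarrow> elt) \<Rightarrow> (gen \<Rightarrow> complex \<Rightarrow> elt \<Rightarrow> elt) \<Rightarrow> bool" where
  "conformal_sv_module D act \<longleftrightarrow>
     (\<forall>x y. D (eadd x y) = eadd (D x) (D y)) \<and>
     (\<forall>c x. D (esc c x) = esc c (D x)) \<and>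
     (\<forall>s l x y. act s l (eadd x y) = eadd (act s l x) (act s l y)) \<and>
     (\<forall>s l c x. act s l (esc c x) = esc c (act s l x)) \<and>
     (\<forall>s l x. eadd (D (act s l x)) (esc (-1) (act s l (D x))) = esc (- l) (act s l x)) \<and>
     (\<forall>s t l m x. eadd (act s l (act t m x)) (esc (-1) (act t m (act s l x))) =
        (case sv_br s t of
           None \<Rightarrow> ezero
         | Some (c1, c2, z) \<Rightarrow> esc (c2 * l - c1 * (l + m)) (act z (l + m) x)))"

definition ext_D :: "complex \<Rightarrow> extdata \<Rightarrow> elt \<Rightarrow> elt" where
  "ext_D \<gamma> X x = (case X of (f, g, h, a) \<Rightarrow>
      (pCons 0 (fst x) + smult (snd x) a, \<gamma> * snd x))"

definition ext_act :: "complex \<Rightarrow> complex \<Rightarrow> extdata \<Rightarrow> gen \<Rightarrow> complex \<Rightarrow> elt \<Rightarrow> elt" where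
  "ext_act \<alpha> \<Delta> X s l x = (case X of (f, g, h, a) \<Rightarrow> (case s of
      L \<Rightarrow> (pcompose (fst x) [:l, 1:] * [:\<alpha> + \<Delta> * l, 1:] + smult (snd x) (poly f [:l:]), 0)
    | M \<Rightarrow> (smult (snd x) (poly g [:l:]), 0)
    | Y \<Rightarrow> (smult (snd x) (poly h [:l:]), 0)))"

definition is_ext :: "complex \<Rightarrow> complex \<Rightarrow> complex \<Rightarrow> extdata \<Rightarrow> bool" where
  "is_ext \<alpha> \<Delta> \<gamma> X \<longleftrightarrow> conformal_sv_module (ext_D \<gamma> X) (ext_act \<alpha> \<Delta> X)"

definition ext_equiv :: "complex \<Rightarrow> complex \<Rightarrow> complex \<Rightarrow> extdata \<Rightarrow> extdata \<Rightarrow> bool" where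
  "ext_equiv \<alpha> \<Delta> \<gamma> X X' \<longleftrightarrow> (\<exists>\<phi> :: elt \<Rightarrow> elt.
      (\<forall>x y. \<phi> (eadd x y) = eadd (\<phi> x) (\<phi> y)) \<and>
      (\<forall>c x. \<phi> (esc c x) = esc c (\<phi> x)) \<and>
      (\<forall>p. \<phi> (p, 0) = (p, 0)) \<and>
      (\<forall>x. snd (\<phi> x) = snd x) \<and>
      (\<forall>x. \<phi> (ext_D \<gamma> X x) = ext_D \<gamma> X' (\<phi> x)) \<and>
      (\<forall>s l x. \<phi> (ext_act \<alpha> \<Delta> X s l x) = ext_act \<alpha> \<Delta> X' s l (\<phi> x)))"

definition ext_trivial :: "complex \<Rightarrow> complex \<Rightarrow> complex \<Rightarrow> extdata \<Rightarrow> bool" where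
  "ext_trivial \<alpha> \<Delta> \<gamma> X \<longleftrightarrow> ext_equiv \<alpha> \<Delta> \<gamma> X (0, 0, 0, 0)"

definition ext_diff :: "extdata \<Rightarrow> complex \<Rightarrow> extdata \<Rightarrow> extdata" where
  "ext_diff X c X0 = (case X of (f, g, h, a) \<Rightarrow> case X0 of (f0, g0, h0, a0) \<Rightarrow>
      (f - smult [:c:] f0, g - smult [:c:] g0, h - smult [:c:] h0, a - smult c a0))"

definition const_ext :: "complex \<Rightarrow> extdata" where
  "const_ext a0 = ([:[:a0:]:], 0, 0, [:a0:])"

end

theory Submission
  imports Defs
begin

text \<open>Applying the compatibility of \<open>\<partial>\<close> with the \<open>\<lambda>\<close>-action to \<open>c\<^sub>\<gamma>\<close> forces
  \<open>g = h = 0\<close> and \<open>(\<partial> + \<lambda> - \<gamma>) f(\<partial>, \<lambda>) = a(\<partial> + \<lambda>) (\<partial> + \<alpha> + \<Delta> \<lambda>)\<close>.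
  Substituting \<open>\<partial> = \<gamma> - \<lambda>\<close> gives \<open>a(\<gamma>) (\<alpha> + \<gamma> + (\<Delta> - 1) \<lambda>) = 0\<close>.
  If \<open>a(\<gamma>) = 0\<close>, write \<open>a = (\<partial> - \<gamma>) b\<close>; then \<open>f(\<partial>, \<lambda>) = b(\<partial> + \<lambda>) (\<partial> + \<alpha> + \<Delta> \<lambda>)\<close>
  and \<open>c\<^sub>\<gamma> \<mapsto> c\<^sub>\<gamma> + b(\<partial>) v\<close> splits the extension.  Conversely a splitting forces
  \<open>a(\<gamma>) = 0\<close>.  Hence an extension is trivial iff \<open>a(\<gamma>) = 0\<close>, nontrivial ones need
  \<open>\<alpha> + \<gamma> = 0\<close> and \<open>\<Delta> = 1\<close>, and then \<open>X \<mapsto> a(\<gamma>)\<close> identifies \<open>Ext\<close> with \<open>\<complex>\<close>.\<close>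

lemma poly_ext: "(\<And>z. poly p z = poly q z) \<Longrightarrow> p = (q :: complex poly)"
  by (metis poly_eq_poly_eq_iff ext)

lemma elt_eqI: "(\<And>z. poly (fst u) z = poly (fst v) z) \<Longrightarrow> snd u = snd v \<Longrightarrow> u = (v :: elt)"
  by (metis poly_ext prod.expand)

definition d_compatible :: "complex \<Rightarrow> complex \<Rightarrow> complex \<Rightarrow> extdata \<Rightarrow> bool" where
  "d_compatible \<alpha> \<Delta> \<gamma> X \<longleftrightarrow> (case X of (f, g, h, a) \<Rightarrow> \<forall>l.
     poly g [:l:] = 0 \<and> poly h [:l:] = 0 \<and>
     [:l - \<gamma>, 1:] * poly f [:l:] = pcompose a [:l, 1:] * [:\<alpha> + \<Delta> * l, 1:])"

lemma is_ext_imp_d_compatible: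
  assumes "is_ext \<alpha> \<Delta> \<gamma> (f, g, h, a)"
  shows "d_compatible \<alpha> \<Delta> \<gamma> (f, g, h, a)"
proof -
  let ?D = "ext_D \<gamma> (f, g, h, a)" and ?act = "ext_act \<alpha> \<Delta> (f, g, h, a)"
  have compat: "[:l - \<gamma>, 1:] * fst (?act s l (0, 1)) = fst (?act s l (a, 0))" for s l
  proof (rule poly_ext)
    fix z
    from assms have "eadd (?D (?act s l (0, 1))) (esc (-1) (?act s l (?D (0, 1)))) =
        esc (- l) (?act s l (0, 1))"
      unfolding is_ext_def conformal_sv_module_def by blast
    then have "poly (fst (eadd (?D (?act s l (0, 1))) (esc (-1) (?act s l (?D (0, 1)))))) z =
        poly (fst (esc (- l) (?act s l (0, 1)))) z"
      by simp
    then show "poly ([:l - \<gamma>, 1:] * fst (?act s l (0, 1))) z = poly (fst (?act s l (a, 0))) z"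
      by (cases s) (simp_all add: eadd_def esc_def ext_D_def ext_act_def algebra_simps)
  qed
  show ?thesis
    unfolding d_compatible_def using compat[of _ M] compat[of _ Y] compat[of _ L]
    by (simp add: ext_act_def del: mult_pCons_left)
qed

lemma d_compatible_ext_diff:
  assumes "d_compatible \<alpha> \<Delta> \<gamma> (f, g, h, a)" and "d_compatible \<alpha> \<Delta> \<gamma> (f0, g0, h0, a0)"
  shows "d_compatible \<alpha> \<Delta> \<gamma> (ext_diff (f, g, h, a) c (f0, g0, h0, a0))"
proof -
  have "[:l - \<gamma>, 1:] * poly (f - smult [:c:] f0) [:l:] =
      pcompose (a - smult c a0) [:l, 1:] * [:\<alpha> + \<Delta> * l, 1:]" for l
  proof -
    have "[:l - \<gamma>, 1:] * poly (f - smult [:c:] f0) [:l:] =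
        [:l - \<gamma>, 1:] * poly f [:l:] - smult c ([:l - \<gamma>, 1:] * poly f0 [:l:])"
      by (rule poly_ext) (simp add: algebra_simps)
    also have "\<dots> = pcompose (a - smult c a0) [:l, 1:] * [:\<alpha> + \<Delta> * l, 1:]"
      using assms by (simp add: d_compatible_def pcompose_diff pcompose_smult left_diff_distrib
          del: mult_pCons_left mult_pCons_right)
    finally show ?thesis .
  qed
  then show ?thesis
    using assms by (simp add: d_compatible_def ext_diff_def del: mult_pCons_left)
qed

lemma d_compatible_root:
  assumes "d_compatible \<alpha> \<Delta> \<gamma> (f, g, h, a)"
  shows "poly a \<gamma> * (\<alpha> + \<gamma> + (\<Delta> - 1) * l) = 0"
proof -
  have "poly ([:l - \<gamma>, 1:] * poly f [:l:]) (\<gamma> - l) =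
      poly (pcompose a [:l, 1:] * [:\<alpha> + \<Delta> * l, 1:]) (\<gamma> - l)"
    using assms by (simp add: d_compatible_def del: mult_pCons_left)
  then show ?thesis by (simp add: poly_pcompose algebra_simps)
qed

lemma coboundary_ext_trivial:
  assumes g: "\<And>l. poly g [:l:] = 0" and h: "\<And>l. poly h [:l:] = 0"
    and a: "a = [:-\<gamma>, 1:] * b"
    and f: "\<And>l. poly f [:l:] = pcompose b [:l, 1:] * [:\<alpha> + \<Delta> * l, 1:]"
  shows "ext_trivial \<alpha> \<Delta> \<gamma> (f, g, h, a)"
  unfolding ext_trivial_def ext_equiv_def
proof (intro exI[of _ "\<lambda>(p, k). (p + smult k b, k)"] conjI allI)
  fix x y :: elt
  show "(\<lambda>(p, k). (p + smult k b, k)) (eadd x y) =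
      eadd ((\<lambda>(p, k). (p + smult k b, k)) x) ((\<lambda>(p, k). (p + smult k b, k)) y)"
    by (simp add: eadd_def smult_add_left split: prod.splits)
next
  fix c and x :: elt
  show "(\<lambda>(p, k). (p + smult k b, k)) (esc c x) = esc c ((\<lambda>(p, k). (p + smult k b, k)) x)"
    by (simp add: esc_def smult_add_right split: prod.splits)
next
  fix x :: elt
  show "(\<lambda>(p, k). (p + smult k b, k)) (ext_D \<gamma> (f, g, h, a) x) =
      ext_D \<gamma> (0, 0, 0, 0) ((\<lambda>(p, k). (p + smult k b, k)) x)"
    by (cases x) (auto simp: ext_D_def a algebra_simps intro: poly_ext)
next
  fix s l and x :: elt
  show "(\<lambda>(p, k). (p + smult k b, k)) (ext_act \<alpha> \<Delta> (f, g, h, a) s l x) =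
      ext_act \<alpha> \<Delta> (0, 0, 0, 0) s l ((\<lambda>(p, k). (p + smult k b, k)) x)"
    by (cases x; cases s)
      (simp_all add: ext_act_def g h f pcompose_add pcompose_smult algebra_simps)
qed auto

text \<open>A splitting sends \<open>c\<^sub>\<gamma>\<close> to \<open>c\<^sub>\<gamma> + q(\<partial>) v\<close>; compatibility with \<open>\<partial>\<close> then reads
  \<open>a = (\<partial> - \<gamma>) q\<close>.\<close>
lemma ext_trivial_imp_root:
  assumes "ext_trivial \<alpha> \<Delta> \<gamma> (f, g, h, a)"
  shows "poly a \<gamma> = 0"
proof -
  obtain \<phi> :: "elt \<Rightarrow> elt" where
    add: "\<forall>x y. \<phi> (eadd x y) = eadd (\<phi> x) (\<phi> y)" and
    scale: "\<forall>c x. \<phi> (esc c x) = esc c (\<phi> x)" and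
    on_V: "\<forall>p. \<phi> (p, 0) = (p, 0)" and
    on_quotient: "\<forall>x. snd (\<phi> x) = snd x" and
    D: "\<forall>x. \<phi> (ext_D \<gamma> (f, g, h, a) x) = ext_D \<gamma> (0, 0, 0, 0) (\<phi> x)"
    using assms unfolding ext_trivial_def ext_equiv_def by blast
  obtain q where \<phi>c: "\<phi> (0, 1) = (q, 1)"
    using on_quotient[rule_format, of "(0, 1)"] by (metis prod.collapse snd_conv)
  have "\<phi> (ext_D \<gamma> (f, g, h, a) (0, 1)) = \<phi> (eadd (a, 0) (esc \<gamma> (0, 1)))"
    by (simp add: ext_D_def eadd_def esc_def)
  also have "\<dots> = eadd (\<phi> (a, 0)) (esc \<gamma> (\<phi> (0, 1)))"
    using add scale by metis
  also have "\<dots> = (a + smult \<gamma> q, \<gamma>)"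
    using on_V \<phi>c by (simp add: eadd_def esc_def)
  finally have "\<phi> (ext_D \<gamma> (f, g, h, a) (0, 1)) = (a + smult \<gamma> q, \<gamma>)" .
  moreover have "\<phi> (ext_D \<gamma> (f, g, h, a) (0, 1)) = (pCons 0 q, \<gamma>)"
    using D[rule_format, of "(0, 1)"] \<phi>c by (simp add: ext_D_def del: pCons_0_0)
  ultimately have "a = pCons 0 q - smult \<gamma> q"
    by (simp add: eq_diff_eq)
  then show ?thesis by simp
qed

lemma d_compatible_ext_trivial_iff:
  assumes "d_compatible \<alpha> \<Delta> \<gamma> (f, g, h, a)"
  shows "ext_trivial \<alpha> \<Delta> \<gamma> (f, g, h, a) \<longleftrightarrow> poly a \<gamma> = 0"
proof
  assume "poly a \<gamma> = 0"
  then obtain b where a: "a = [:-\<gamma>, 1:] * b"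
    by (metis poly_eq_0_iff_dvd dvdE)
  show "ext_trivial \<alpha> \<Delta> \<gamma> (f, g, h, a)"
  proof (rule coboundary_ext_trivial[OF _ _ a])
    fix l
    have shift: "pcompose a [:l, 1:] = [:l - \<gamma>, 1:] * pcompose b [:l, 1:]"
      by (rule poly_ext) (simp add: a poly_pcompose algebra_simps)
    have "[:l - \<gamma>, 1:] * poly f [:l:] = pcompose a [:l, 1:] * [:\<alpha> + \<Delta> * l, 1:]"
      using assms by (simp add: d_compatible_def del: mult_pCons_left mult_pCons_right)
    then have "[:l - \<gamma>, 1:] * (poly f [:l:] - pcompose b [:l, 1:] * [:\<alpha> + \<Delta> * l, 1:]) = 0"
      unfolding shift
      by (simp add: right_diff_distrib mult.assoc del: mult_pCons_left mult_pCons_right)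
    then show "poly f [:l:] = pcompose b [:l, 1:] * [:\<alpha> + \<Delta> * l, 1:]"
      by (simp del: mult_pCons_left)
    show "poly g [:l:] = 0" "poly h [:l:] = 0"
      using assms by (simp_all add: d_compatible_def)
  qed
qed (rule ext_trivial_imp_root)

lemma nontrivial_ext_imp_parameters:
  assumes "is_ext \<alpha> \<Delta> \<gamma> X" and "\<not> ext_trivial \<alpha> \<Delta> \<gamma> X"
  shows "\<alpha> + \<gamma> = 0 \<and> \<Delta> = 1"
proof -
  obtain f g h a where X: "X = (f, g, h, a)" by (cases X)
  have compat: "d_compatible \<alpha> \<Delta> \<gamma> X"
    using assms(1) unfolding X by (rule is_ext_imp_d_compatible)
  then have "poly a \<gamma> \<noteq> 0"
    using assms(2) unfolding X by (simp add: d_compatible_ext_trivial_iff)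
  then have "\<alpha> + \<gamma> + (\<Delta> - 1) * l = 0" for l
    using d_compatible_root[of \<alpha> \<Delta> \<gamma> f g h a l] compat X by simp
  from this[of 0] this[of 1] show ?thesis by simp
qed

lemma is_ext_const_ext:
  assumes "\<alpha> + \<gamma> = 0" and "\<Delta> = 1"
  shows "is_ext \<alpha> \<Delta> \<gamma> (const_ext a0)"
proof -
  have \<alpha>: "\<alpha> = - \<gamma>" using assms(1) by (simp add: eq_neg_iff_add_eq_0)
  let ?D = "ext_D \<gamma> (const_ext a0)" and ?act = "ext_act \<alpha> \<Delta> (const_ext a0)"
  show ?thesis
    unfolding is_ext_def conformal_sv_module_def
  proof (intro conjI allI)
    fix x y :: elt
    show "?D (eadd x y) = eadd (?D x) (?D y)"
      by (rule elt_eqI) (simp_all add: ext_D_def const_ext_def eadd_def algebra_simps)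
  next
    fix c and x :: elt
    show "?D (esc c x) = esc c (?D x)"
      by (rule elt_eqI) (simp_all add: ext_D_def const_ext_def esc_def algebra_simps)
  next
    fix s l and x y :: elt
    show "?act s l (eadd x y) = eadd (?act s l x) (?act s l y)"
      by (cases s; rule elt_eqI)
        (simp_all add: ext_act_def const_ext_def eadd_def algebra_simps poly_pcompose)
  next
    fix s l c and x :: elt
    show "?act s l (esc c x) = esc c (?act s l x)"
      by (cases s; rule elt_eqI)
        (simp_all add: ext_act_def const_ext_def esc_def algebra_simps poly_pcompose)
  next
    fix s l and x :: elt
    show "eadd (?D (?act s l x)) (esc (- 1) (?act s l (?D x))) = esc (- l) (?act s l x)"
      by (cases s; rule elt_eqI)
        (simp_all add: \<alpha> assms(2) ext_act_def ext_D_def const_ext_def esc_def eadd_def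
          algebra_simps poly_pcompose)
  next
    fix s t l m and x :: elt
    show "eadd (?act s l (?act t m x)) (esc (- 1) (?act t m (?act s l x))) =
        (case sv_br s t of None \<Rightarrow> ezero
         | Some (c1, c2, z) \<Rightarrow> esc (c2 * l - c1 * (l + m)) (?act z (l + m) x))"
      by (cases s; cases t; rule elt_eqI)
        (simp_all add: \<alpha> assms(2) sv_br_def sv_gen_br_def ezero_def ext_act_def const_ext_def
          esc_def eadd_def algebra_simps poly_pcompose)
  qed
qed

lemma const_ext_nontrivial:
  assumes "a0 \<noteq> 0"
  shows "\<not> ext_trivial \<alpha> \<Delta> \<gamma> (const_ext a0)"
  unfolding const_ext_def
  using assms ext_trivial_imp_root[of \<alpha> \<Delta> \<gamma> "[:[:a0:]:]" 0 0 "[:a0:]"] by auto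

lemma ext_diff_const_ext_trivial:
  assumes "\<alpha> + \<gamma> = 0" and "\<Delta> = 1" and "a0 \<noteq> 0" and "is_ext \<alpha> \<Delta> \<gamma> (f, g, h, a)"
  shows "ext_trivial \<alpha> \<Delta> \<gamma> (ext_diff (f, g, h, a) (poly a \<gamma> / a0) (const_ext a0))"
proof -
  let ?c = "poly a \<gamma> / a0"
  have "d_compatible \<alpha> \<Delta> \<gamma> (ext_diff (f, g, h, a) ?c (const_ext a0))"
    unfolding const_ext_def
    using assms(4) is_ext_const_ext[OF assms(1,2), of a0]
    by (intro d_compatible_ext_diff is_ext_imp_d_compatible) (simp_all add: const_ext_def)
  moreover have "ext_diff (f, g, h, a) ?c (const_ext a0) =
      (f - smult [:?c:] [:[:a0:]:], g - smult [:?c:] 0, h - smult [:?c:] 0, a - smult ?c [:a0:])"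
    by (simp add: ext_diff_def const_ext_def)
  ultimately show ?thesis
    using assms(3) by (simp add: d_compatible_ext_trivial_iff)
qed

theorem theorem3p4:
  fixes \<alpha> \<gamma> \<Delta> :: complex
  assumes "\<Delta> \<noteq> 0"
  shows "((\<exists>X. is_ext \<alpha> \<Delta> \<gamma> X \<and> \<not> ext_trivial \<alpha> \<Delta> \<gamma> X) \<longleftrightarrow> (\<alpha> + \<gamma> = 0 \<and> \<Delta> = 1)) \<and>
         (\<alpha> + \<gamma> = 0 \<and> \<Delta> = 1 \<longrightarrow>
           (\<forall>a0. a0 \<noteq> 0 \<longrightarrow>
              is_ext \<alpha> \<Delta> \<gamma> (const_ext a0) \<and> \<not> ext_trivial \<alpha> \<Delta> \<gamma> (const_ext a0) \<and>
              (\<forall>X. is_ext \<alpha> \<Delta> \<gamma> X \<longrightarrow>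
                 (\<exists>c. ext_trivial \<alpha> \<Delta> \<gamma> (ext_diff X c (const_ext a0))))))"
proof -
  have spanned: "\<exists>c. ext_trivial \<alpha> \<Delta> \<gamma> (ext_diff X c (const_ext a0))"
    if "\<alpha> + \<gamma> = 0" "\<Delta> = 1" "a0 \<noteq> 0" "is_ext \<alpha> \<Delta> \<gamma> X" for X a0
  proof -
    obtain f g h a where X: "X = (f, g, h, a)" by (cases X)
    show ?thesis
      using ext_diff_const_ext_trivial[OF that(1-3) that(4)[unfolded X]] unfolding X ..
  qed
  have "\<exists>X. is_ext \<alpha> \<Delta> \<gamma> X \<and> \<not> ext_trivial \<alpha> \<Delta> \<gamma> X" if "\<alpha> + \<gamma> = 0" "\<Delta> = 1"
    using is_ext_const_ext[OF that, of 1] const_ext_nontrivial[of 1]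
    by (intro exI[of _ "const_ext 1"]) simp
  with nontrivial_ext_imp_parameters
  have "(\<exists>X. is_ext \<alpha> \<Delta> \<gamma> X \<and> \<not> ext_trivial \<alpha> \<Delta> \<gamma> X) \<longleftrightarrow> (\<alpha> + \<gamma> = 0 \<and> \<Delta> = 1)"
    by blast
  then show ?thesis
    using is_ext_const_ext const_ext_nontrivial spanned by simp
qed

end
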